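(* Let $\alpha$ be any graph function on a strongly connected digraph $G$. For any fair infinite sequence of raising operations starting from $\alpha$, with raising vectors $r(1),r(2),\dots$, the limit $r^*=\lim_{t\to\infty}r(t)$ exists and depends only on $\alpha$, not on the sequence of raising operations.
   Context: $G$ is a strongly connected directed graph (self-loops allowed); a graph function assigns a real weight $\alpha_{uv}$ to each edge. For a graph function $\beta$, $\beta_v^{\text{in}}=\max_{u:(u,v)\in G}\beta_{uv}$, $\beta_v^{\text{out}}=\max_{w:(v,w)\in G}\beta_{vw}$, $\rho^R_v=\max\{0,\beta_v^{\text{out}}-\beta_v^{\text{in}}\}$. A raising operation at $v$: if $\rho^R_v>0$, add $\rho^R_v/2$ to each $\beta_{uv}$ ($u\ne v$) and subtract it from each $\beta_{vw}$ ($w\ne v$); otherwise do nothing. A sequence of operations is fair if every vertex occurs infinitely often. The raising vector $r(t)$ satisfies $r(0)=0$ and, if the $t$-th operation is at $v$, $r_v(t)=r_v(t-1)+\rho^R_v/2$ (computed before the operation), other coordinates unchanged. *)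

theory Defs
  imports Complex_Main
begin

text \<open>A graph function is a map beta :: 'v => 'v => real;
  only its values on edges E are meaningful.\<close>

definition strongly_connected :: "'v set \<Rightarrow> ('v \<times> 'v) set \<Rightarrow> bool" where
  "strongly_connected V E \<longleftrightarrow> E \<subseteq> V \<times> V \<and> (\<forall>u\<in>V. \<forall>w\<in>V. (u, w) \<in> E\<^sup>+)"

definition beta_in :: "('v \<times> 'v) set \<Rightarrow> ('v \<Rightarrow> 'v \<Rightarrow> real) \<Rightarrow> 'v \<Rightarrow> real" where
  "beta_in E \<beta> v = Max {\<beta> u v | u. (u, v) \<in> E}"

definition beta_out :: "('v \<times> 'v) set \<Rightarrow> ('v \<Rightarrow> 'v \<Rightarrow> real) \<Rightarrow> 'v \<Rightarrow> real" where
  "beta_out E \<beta> v = Max {\<beta> v w | w. (v, w) \<in> E}"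

definition rhoR :: "('v \<times> 'v) set \<Rightarrow> ('v \<Rightarrow> 'v \<Rightarrow> real) \<Rightarrow> 'v \<Rightarrow> real" where
  "rhoR E \<beta> v = max 0 (beta_out E \<beta> v - beta_in E \<beta> v)"

definition raise :: "('v \<times> 'v) set \<Rightarrow> ('v \<Rightarrow> 'v \<Rightarrow> real) \<Rightarrow> 'v \<Rightarrow> ('v \<Rightarrow> 'v \<Rightarrow> real)" where
  "raise E \<beta> v = (let \<rho> = rhoR E \<beta> v in
     if \<rho> > 0 then
       (\<lambda>u w. if (u, w) \<in> E \<and> w = v \<and> u \<noteq> v then \<beta> u w + \<rho> / 2
              else if (u, w) \<in> E \<and> u = v \<and> w \<noteq> v then \<beta> u w - \<rho> / 2
              else \<beta> u w)
     else \<beta>)"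

text \<open>State after t operations; sigma t is the (t+1)-th operation.\<close>
primrec beta_seq :: "('v \<times> 'v) set \<Rightarrow> ('v \<Rightarrow> 'v \<Rightarrow> real) \<Rightarrow> (nat \<Rightarrow> 'v) \<Rightarrow> nat \<Rightarrow> ('v \<Rightarrow> 'v \<Rightarrow> real)" where
  "beta_seq E \<alpha> \<sigma> 0 = \<alpha>"
| "beta_seq E \<alpha> \<sigma> (Suc t) = raise E (beta_seq E \<alpha> \<sigma> t) (\<sigma> t)"

primrec raising_vec :: "('v \<times> 'v) set \<Rightarrow> ('v \<Rightarrow> 'v \<Rightarrow> real) \<Rightarrow> (nat \<Rightarrow> 'v) \<Rightarrow> nat \<Rightarrow> 'v \<Rightarrow> real" where
  "raising_vec E \<alpha> \<sigma> 0 = (\<lambda>v. 0)"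
| "raising_vec E \<alpha> \<sigma> (Suc t) = (\<lambda>v. raising_vec E \<alpha> \<sigma> t v +
      (if v = \<sigma> t then rhoR E (beta_seq E \<alpha> \<sigma> t) v / 2 else 0))"

definition fair :: "'v set \<Rightarrow> (nat \<Rightarrow> 'v) \<Rightarrow> bool" where
  "fair V \<sigma> \<longleftrightarrow> (\<forall>t. \<sigma> t \<in> V) \<and> (\<forall>v\<in>V. infinite {t. \<sigma> t = v})"

end

theory Submission
  imports Defs
begin

text \<open>Write the state after some raisings as the potential reweighting
  \<open>\<alpha> u w + r w - r u\<close> of \<open>\<alpha>\<close> by the raising vector \<open>r\<close>. A raising at \<open>v\<close> then becomes the
  monotone update \<open>r v := r v + max 0 (P r v - Q r v - 2 r v) / 2\<close>, with
  \<open>P r v = max\<^sub>w (\<alpha> v w + r w)\<close> and \<open>Q r v = max\<^sub>u (\<alpha> u v - r u)\<close>. Call \<open>s\<close> stable if this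
  update fixes it at every vertex. Monotonicity shows that \<open>r(t)\<close> never exceeds a nonnegative
  stable \<open>s\<close>; since \<open>r(t)\<close> is also nondecreasing, it converges, and fairness makes the limit
  itself stable. Hence every fair sequence converges to the least nonnegative stable vector.
  A nonnegative stable vector exists: with \<open>\<mu>\<close> the maximum cycle mean of \<open>\<alpha>\<close>, the longest-path
  potential \<open>d\<close> for the weights \<open>\<alpha> - \<mu>\<close> from a vertex on a critical cycle is finite, and \<open>-d\<close>
  (shifted to be nonnegative) reweights \<open>\<alpha>\<close> so that all edges weigh at most \<open>\<mu>\<close> while every
  vertex has an incoming edge of weight \<open>\<mu>\<close>.\<close>

fun walk_weight :: "('v \<Rightarrow> 'v \<Rightarrow> real) \<Rightarrow> 'v list \<Rightarrow> real" where
  "walk_weight f (x # y # zs) = f x y + walk_weight f (y # zs)"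
| "walk_weight f _ = 0"

abbreviation walk :: "('v \<times> 'v) set \<Rightarrow> 'v list \<Rightarrow> bool" where
  "walk E \<equiv> successively (\<lambda>u w. (u, w) \<in> E)"

definition closed_walk :: "('v \<times> 'v) set \<Rightarrow> 'v list \<Rightarrow> bool" where
  "closed_walk E xs \<longleftrightarrow> walk E xs \<and> 2 \<le> length xs \<and> hd xs = last xs"

definition walk_mean :: "('v \<Rightarrow> 'v \<Rightarrow> real) \<Rightarrow> 'v list \<Rightarrow> real" where
  "walk_mean f xs = walk_weight f xs / (real (length xs) - 1)"

lemma walk_weight_append:
  "walk_weight f (xs @ y # ys) = walk_weight f (xs @ [y]) + walk_weight f (y # ys)"
  by (induction xs rule: induct_list012) auto

lemma walk_weight_snoc:
  assumes "xs \<noteq> []"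
  shows "walk_weight f (xs @ [z]) = walk_weight f xs + f (last xs) z"
proof -
  obtain ys y where "xs = ys @ [y]" using assms by (metis rev_exhaust)
  then show ?thesis using walk_weight_append[of f ys y "[z]"] by simp
qed

lemma walk_weight_diff_const:
  "xs \<noteq> [] \<Longrightarrow> walk_weight (\<lambda>u w. f u w - c) xs = walk_weight f xs - c * (real (length xs) - 1)"
  by (induction xs rule: induct_list012) (auto simp: algebra_simps)

lemma walk_set_subset:
  "walk E xs \<Longrightarrow> 2 \<le> length xs \<Longrightarrow> E \<subseteq> V \<times> V \<Longrightarrow> set xs \<subseteq> V"
proof (induction xs rule: induct_list012)
  case (3 x y zs)
  then show ?case by (cases zs) auto
qed auto

lemma trancl_imp_walk:
  "(u, w) \<in> E\<^sup>+ \<Longrightarrow> \<exists>xs. walk E xs \<and> 2 \<le> length xs \<and> hd xs = u \<and> last xs = w"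
proof (induction rule: trancl_induct)
  case (base y)
  then show ?case by (intro exI[of _ "[u, y]"]) auto
next
  case (step y z)
  then obtain xs where "walk E xs" "2 \<le> length xs" "hd xs = u" "last xs = y" by blast
  then show ?case using step
    by (intro exI[of _ "xs @ [z]"]) (auto simp: successively_append_iff hd_append)
qed

lemma walk_join:
  "walk E p \<Longrightarrow> walk E q \<Longrightarrow> last p = hd q \<Longrightarrow> walk E (p @ tl q)"
  by (cases q) (auto simp: successively_append_iff successively_Cons)

lemma walk_weight_join:
  assumes "p \<noteq> []" "last p = hd q"
  shows "walk_weight f (p @ tl q) = walk_weight f p + walk_weight f q"
proof (cases q)
  case (Cons v q')
  obtain p' where "p = p' @ [v]" using assms Cons by (metis append_butlast_last_id list.sel(1))
  then show ?thesis using Cons walk_weight_append[of f p' v q'] by simp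
qed simp

text \<open>A closed walk longer than \<open>card V + 1\<close> repeats a vertex after its start, and cutting
  out the closed walk between the two occurrences splits it into two shorter ones.\<close>

lemma closed_walk_split:
  assumes "finite V" "E \<subseteq> V \<times> V" "closed_walk E xs" "card V + 1 < length xs"
  obtains c1 c2 where "closed_walk E c1" "closed_walk E c2"
    "length c1 < length xs" "length c2 < length xs" "length c1 + length c2 = length xs + 1"
    "walk_weight f xs = walk_weight f c1 + walk_weight f c2"
proof -
  obtain h ws where xs: "xs = h # ws" using assms(3) unfolding closed_walk_def by (cases xs) auto
  have "set xs \<subseteq> V"
    using walk_set_subset[OF _ _ assms(2)] assms(3) unfolding closed_walk_def by blast
  then have "card (set ws) \<le> card V" using xs card_mono[OF assms(1)] by simp
  then have "\<not> distinct ws" using assms(4) xs distinct_card by fastforce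
  then obtain a v b cc where ws: "ws = a @ [v] @ b @ [v] @ cc"
    using not_distinct_decomp by blast
  define c1 where "c1 = v # b @ [v]"
  define c2 where "c2 = h # a @ v # cc"
  have "walk E xs" "hd xs = last xs" using assms(3) unfolding closed_walk_def by simp_all
  then have "walk E ((h # a) @ (v # b) @ (v # cc))" "h = last (v # cc)"
    unfolding xs ws by simp_all
  then have "walk E (h # a)" "walk E (v # b)" "walk E (v # cc)"
    "(last (h # a), v) \<in> E" "(last (v # b), v) \<in> E" "h = last (v # cc)"
    unfolding successively_append_iff by simp_all
  then have "closed_walk E c1" "closed_walk E c2"
    unfolding c1_def c2_def closed_walk_def
    using successively_append_iff[of _ "v # b" "[v]"] successively_append_iff[of _ "h # a" "v # cc"]
    by simp_all
  moreover have "walk_weight f xs = walk_weight f c1 + walk_weight f c2"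
    using walk_weight_append[of f "h # a" v "b @ v # cc"] walk_weight_append[of f "v # b" v cc]
      walk_weight_append[of f "h # a" v cc]
    unfolding xs ws c1_def c2_def by simp
  moreover have "length c1 + length c2 = length xs + 1" "length c1 < length xs" "length c2 < length xs"
    unfolding xs ws c1_def c2_def by simp_all
  ultimately show ?thesis using that by blast
qed

lemma closed_walk_mean_bound_short:
  assumes "finite V" "E \<subseteq> V \<times> V" "closed_walk E xs"
  shows "\<exists>ys. closed_walk E ys \<and> length ys \<le> card V + 1
           \<and> walk_weight f xs \<le> walk_mean f ys * (real (length xs) - 1)"
  using assms(3)
proof (induction "length xs" arbitrary: xs rule: less_induct)
  case less
  show ?case
  proof (cases "length xs \<le> card V + 1")
    case True
    have "real (length xs) - 1 > 0" using less.prems unfolding closed_walk_def by simp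
    then show ?thesis using True less.prems unfolding walk_mean_def by auto
  next
    case False
    then obtain c1 c2 where c: "closed_walk E c1" "closed_walk E c2"
      "length c1 < length xs" "length c2 < length xs" "length c1 + length c2 = length xs + 1"
      "walk_weight f xs = walk_weight f c1 + walk_weight f c2"
      using closed_walk_split[OF assms(1,2) less.prems, of f] by (metis not_le)
    obtain y1 y2 where y: "closed_walk E y1" "length y1 \<le> card V + 1"
      "walk_weight f c1 \<le> walk_mean f y1 * (real (length c1) - 1)"
      "closed_walk E y2" "length y2 \<le> card V + 1"
      "walk_weight f c2 \<le> walk_mean f y2 * (real (length c2) - 1)"
      using less.hyps[OF c(3,1)] less.hyps[OF c(4,2)] by blast
    define m where "m = max (walk_mean f y1) (walk_mean f y2)"
    obtain ys where ys: "closed_walk E ys" "length ys \<le> card V + 1" "walk_mean f ys = m"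
      using y unfolding m_def max_def by (cases "walk_mean f y1 \<le> walk_mean f y2") auto
    have "real (length c1) - 1 \<ge> 0" "real (length c2) - 1 \<ge> 0"
      using c(1,2) unfolding closed_walk_def by auto
    then have "walk_mean f y1 * (real (length c1) - 1) \<le> m * (real (length c1) - 1)"
      "walk_mean f y2 * (real (length c2) - 1) \<le> m * (real (length c2) - 1)"
      unfolding m_def by (simp_all add: mult_right_mono)
    then have "walk_weight f xs \<le> m * (real (length c1) - 1) + m * (real (length c2) - 1)"
      using c(6) y(3,6) by linarith
    also have "\<dots> = m * (real (length c1 + length c2) - 2)"
      by (simp add: algebra_simps)
    also have "\<dots> = m * (real (length xs) - 1)"
      using c(5) by simp
    finally show ?thesis using ys by metis
  qed
qed

text \<open>The maximum cycle mean is attained among the finitely many closed walks of length at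
  most \<open>card V + 1\<close>.\<close>

lemma max_cycle_mean_exists:
  assumes "finite V" "E \<subseteq> V \<times> V" "closed_walk E xs\<^sub>0"
  shows "\<exists>\<mu>. (\<forall>xs. closed_walk E xs \<longrightarrow> walk_weight f xs \<le> \<mu> * (real (length xs) - 1))
           \<and> (\<exists>xs. closed_walk E xs \<and> walk_weight f xs = \<mu> * (real (length xs) - 1))"
proof -
  define Short where "Short = {ys. closed_walk E ys \<and> length ys \<le> card V + 1}"
  have "Short \<subseteq> {ys. set ys \<subseteq> V \<and> length ys \<le> card V + 1}"
    using walk_set_subset[OF _ _ assms(2)] unfolding Short_def closed_walk_def by blast
  then have fin: "finite Short" using finite_lists_length_le[OF assms(1)] finite_subset by blast
  have ne: "Short \<noteq> {}"
    using closed_walk_mean_bound_short[OF assms] unfolding Short_def by blast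
  define \<mu> where "\<mu> = Max (walk_mean f ` Short)"
  have upper: "walk_weight f xs \<le> \<mu> * (real (length xs) - 1)" if xs: "closed_walk E xs" for xs
  proof -
    obtain ys where ys: "ys \<in> Short" "walk_weight f xs \<le> walk_mean f ys * (real (length xs) - 1)"
      using closed_walk_mean_bound_short[OF assms(1,2) xs] unfolding Short_def by blast
    have "walk_mean f ys \<le> \<mu>" unfolding \<mu>_def using fin ys(1) by simp
    moreover have "real (length xs) - 1 \<ge> 0" using xs unfolding closed_walk_def by simp
    ultimately have "walk_mean f ys * (real (length xs) - 1) \<le> \<mu> * (real (length xs) - 1)"
      by (rule mult_right_mono)
    then show ?thesis using ys(2) by linarith
  qed
  have "\<mu> \<in> walk_mean f ` Short" unfolding \<mu>_def using fin ne by simp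
  then obtain ys where ys: "ys \<in> Short" "walk_mean f ys = \<mu>" by blast
  have "real (length ys) - 1 > 0" using ys(1) unfolding Short_def closed_walk_def by simp
  then have "walk_weight f ys = \<mu> * (real (length ys) - 1)"
    using ys(2) unfolding walk_mean_def by (simp add: field_simps)
  then show ?thesis using upper ys(1) unfolding Short_def by blast
qed

locale strongly_connected_digraph =
  fixes V :: "'v set" and E :: "('v \<times> 'v) set"
  assumes finite_vertices: "finite V" and strongly_connected: "strongly_connected V E"
begin

lemma edges_subset: "E \<subseteq> V \<times> V"
  using strongly_connected unfolding strongly_connected_def by blast

lemma reachable: "u \<in> V \<Longrightarrow> w \<in> V \<Longrightarrow> (u, w) \<in> E\<^sup>+"
  using strongly_connected unfolding strongly_connected_def by blast

lemma finite_edges: "finite E"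
  using edges_subset finite_vertices by (meson finite_SigmaI finite_subset)

lemma finite_successors: "finite {w. (v, w) \<in> E}"
  using finite_imageI[OF finite_edges, of snd] by (rule finite_subset[rotated]) force

lemma finite_predecessors: "finite {u. (u, v) \<in> E}"
  using finite_imageI[OF finite_edges, of fst] by (rule finite_subset[rotated]) force

lemma successors_nonempty: "v \<in> V \<Longrightarrow> {w. (v, w) \<in> E} \<noteq> {}"
  using reachable[of v v] by (auto elim: converse_tranclE)

lemma predecessors_nonempty: "v \<in> V \<Longrightarrow> {u. (u, v) \<in> E} \<noteq> {}"
  using reachable[of v v] by (auto elim: tranclE)

lemma closed_walk_hd_in_vertices: "closed_walk E xs \<Longrightarrow> hd xs \<in> V"
  using walk_set_subset[OF _ _ edges_subset, of xs] unfolding closed_walk_def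
  by (metis hd_in_set list.size(3) not_numeral_le_zero subsetD)

lemma closed_walk_through: "v \<in> V \<Longrightarrow> \<exists>xs. closed_walk E xs \<and> hd xs = v"
  using trancl_imp_walk[OF reachable[of v v]] unfolding closed_walk_def by auto

definition path_weights :: "('v \<Rightarrow> 'v \<Rightarrow> real) \<Rightarrow> 'v \<Rightarrow> 'v \<Rightarrow> real set" where
  "path_weights c x v = {walk_weight c p | p. walk E p \<and> 2 \<le> length p \<and> hd p = x \<and> last p = v}"

lemma path_weights_nonempty: "x \<in> V \<Longrightarrow> v \<in> V \<Longrightarrow> path_weights c x v \<noteq> {}"
  using trancl_imp_walk[OF reachable] unfolding path_weights_def by blast

definition max_path_weight :: "('v \<Rightarrow> 'v \<Rightarrow> real) \<Rightarrow> 'v \<Rightarrow> 'v \<Rightarrow> real" where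
  "max_path_weight c x v = Sup (path_weights c x v)"

lemma path_weights_snoc:
  "y \<in> path_weights c x u \<Longrightarrow> (u, v) \<in> E \<Longrightarrow> y + c u v \<in> path_weights c x v"
proof -
  assume "y \<in> path_weights c x u" and uv: "(u, v) \<in> E"
  then obtain p where p: "walk E p" "2 \<le> length p" "hd p = x" "last p = u" "y = walk_weight c p"
    unfolding path_weights_def by blast
  then have "p \<noteq> []" by auto
  then have "walk E (p @ [v])" "y + c u v = walk_weight c (p @ [v])" "hd (p @ [v]) = x"
    "2 \<le> length (p @ [v])" "last (p @ [v]) = v"
    using p uv walk_weight_snoc[of p c v] by (simp_all add: successively_append_iff)
  then show ?thesis unfolding path_weights_def by blast
qed

lemma path_weights_last_edge:
  assumes "y \<in> path_weights c x v"
  shows "\<exists>u. (u, v) \<in> E \<and> (y - c u v \<in> path_weights c x u \<or> u = x \<and> y = c x v)"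
proof -
  obtain p where p: "walk E p" "2 \<le> length p" "hd p = x" "last p = v" "y = walk_weight c p"
    using assms unfolding path_weights_def by blast
  define p0 where "p0 = butlast p"
  have p0: "p = p0 @ [v]" "p0 \<noteq> []"
    using p(2,4) append_butlast_last_id[of p] unfolding p0_def by (auto simp flip: length_0_conv)
  define u where "u = last p0"
  have uv: "walk E p0" "(u, v) \<in> E" "y = walk_weight c p0 + c u v"
    using p p0 walk_weight_snoc[of p0 c v] unfolding u_def by (simp_all add: successively_append_iff)
  show ?thesis
  proof (cases "2 \<le> length p0")
    case True
    moreover have "hd p0 = x" using p(3) p0 by simp
    ultimately have "y - c u v \<in> path_weights c x u"
      using uv unfolding path_weights_def u_def by auto
    then show ?thesis using uv(2) by blast
  next
    case False
    then obtain z where "p0 = [z]" using p0(2) by (cases p0) (auto simp: Suc_le_eq)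
    then show ?thesis using p p0 uv unfolding u_def by auto
  qed
qed

context
  fixes c :: "'v \<Rightarrow> 'v \<Rightarrow> real"
  assumes closed_walk_weight_nonpos: "\<And>xs. closed_walk E xs \<Longrightarrow> walk_weight c xs \<le> 0"
begin

text \<open>Closing a walk from \<open>x\<close> to \<open>v\<close> by a fixed walk back to \<open>x\<close> bounds its weight.\<close>

lemma path_weights_bdd_above:
  assumes "x \<in> V" "v \<in> V"
  shows "bdd_above (path_weights c x v)"
proof -
  obtain q where q: "walk E q" "2 \<le> length q" "hd q = v" "last q = x"
    using trancl_imp_walk[OF reachable[OF assms(2,1)]] by blast
  have "y \<le> - walk_weight c q" if y: "y \<in> path_weights c x v" for y
  proof -
    obtain p where p: "walk E p" "2 \<le> length p" "hd p = x" "last p = v" "y = walk_weight c p"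
      using y unfolding path_weights_def by blast
    have "tl q \<noteq> []" "p \<noteq> []" using p(2) q(2) by (cases q; auto)+
    then have "closed_walk E (p @ tl q)"
      using p q walk_join[of E p q] unfolding closed_walk_def by (auto simp: last_tl hd_append)
    then show ?thesis
      using closed_walk_weight_nonpos walk_weight_join[of p q c] p q by fastforce
  qed
  then show ?thesis unfolding bdd_above_def by blast
qed

lemma path_weight_le_max:
  "x \<in> V \<Longrightarrow> v \<in> V \<Longrightarrow> y \<in> path_weights c x v \<Longrightarrow> y \<le> max_path_weight c x v"
  unfolding max_path_weight_def using path_weights_bdd_above by (intro cSup_upper)

lemma max_path_weight_edge:
  assumes "x \<in> V" "(u, v) \<in> E"
  shows "max_path_weight c x u + c u v \<le> max_path_weight c x v"
proof -
  have uv: "u \<in> V" "v \<in> V" using assms(2) edges_subset by auto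
  have "y \<le> max_path_weight c x v - c u v" if "y \<in> path_weights c x u" for y
    using path_weight_le_max[OF assms(1) uv(2) path_weights_snoc[OF that assms(2)]] by simp
  then have "max_path_weight c x u \<le> max_path_weight c x v - c u v"
    unfolding max_path_weight_def[of c x u]
    using path_weights_nonempty[OF assms(1) uv(1)] by (intro cSup_least)
  then show ?thesis by simp
qed

lemma max_path_weight_tight:
  assumes critical: "closed_walk E cw" "walk_weight c cw = 0" and v: "v \<in> V"
  shows "\<exists>u. (u, v) \<in> E \<and> max_path_weight c (hd cw) v \<le> max_path_weight c (hd cw) u + c u v"
proof -
  let ?x = "hd cw" and ?d = "max_path_weight c (hd cw)"
  have x: "?x \<in> V" using closed_walk_hd_in_vertices[OF critical(1)] .
  have "walk_weight c cw \<in> path_weights c ?x ?x"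
    using critical(1) unfolding path_weights_def closed_walk_def by auto
  then have d_x: "0 \<le> ?d ?x" using path_weight_le_max[OF x x] critical(2) by simp
  let ?M = "Max ((\<lambda>u. ?d u + c u v) ` {u. (u, v) \<in> E})"
  have fin: "finite ((\<lambda>u. ?d u + c u v) ` {u. (u, v) \<in> E})"
    using finite_predecessors by simp
  have "y \<le> ?M" if y: "y \<in> path_weights c ?x v" for y
  proof -
    obtain u where u: "(u, v) \<in> E" "y - c u v \<in> path_weights c ?x u \<or> u = ?x \<and> y = c ?x v"
      using path_weights_last_edge[OF y] by blast
    have "u \<in> V" using u(1) edges_subset by auto
    then have "y \<le> ?d u + c u v" using u(2) path_weight_le_max[OF x] d_x by force
    also have "\<dots> \<le> ?M" using fin u(1) by (intro Max_ge) auto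
    finally show ?thesis .
  qed
  then have "?d v \<le> ?M"
    unfolding max_path_weight_def[of c ?x v] using path_weights_nonempty[OF x v] by (intro cSup_least)
  moreover have "?M \<in> (\<lambda>u. ?d u + c u v) ` {u. (u, v) \<in> E}"
    using fin predecessors_nonempty[OF v] by (intro Max_in) auto
  ultimately show ?thesis by auto
qed

end

end

lemma Max_image_mono:
  assumes "finite S" "S \<noteq> {}" "\<And>x. x \<in> S \<Longrightarrow> f x \<le> g x"
  shows "Max (f ` S) \<le> Max (g ` S)"
proof -
  have "\<forall>x\<in>S. f x \<le> Max (g ` S)"
    using assms(1,3) by (meson Max_ge finite_imageI image_eqI order_trans)
  then show ?thesis using assms(1,2) by simp
qed

locale raising_process = strongly_connected_digraph V E
  for V :: "'v set" and E :: "('v \<times> 'v) set" +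
  fixes \<alpha> :: "'v \<Rightarrow> 'v \<Rightarrow> real"
begin

definition reweighted :: "('v \<Rightarrow> real) \<Rightarrow> 'v \<Rightarrow> 'v \<Rightarrow> real" where
  "reweighted r = (\<lambda>u w. if (u, w) \<in> E then \<alpha> u w + r w - r u else \<alpha> u w)"

definition out_potential :: "('v \<Rightarrow> real) \<Rightarrow> 'v \<Rightarrow> real" where
  "out_potential r v = Max ((\<lambda>w. \<alpha> v w + r w) ` {w. (v, w) \<in> E})"

definition in_potential :: "('v \<Rightarrow> real) \<Rightarrow> 'v \<Rightarrow> real" where
  "in_potential r v = Max ((\<lambda>u. \<alpha> u v - r u) ` {u. (u, v) \<in> E})"

definition excess :: "('v \<Rightarrow> real) \<Rightarrow> 'v \<Rightarrow> real" where
  "excess r v = max 0 (out_potential r v - in_potential r v - 2 * r v)"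

definition stable :: "('v \<Rightarrow> real) \<Rightarrow> bool" where
  "stable s \<longleftrightarrow> (\<forall>v\<in>V. out_potential s v - in_potential s v \<le> 2 * s v)"

lemma rhoR_reweighted:
  assumes v: "v \<in> V"
  shows "rhoR E (reweighted r) v = excess r v"
proof -
  have "{reweighted r v w | w. (v, w) \<in> E} = (\<lambda>w. (\<alpha> v w + r w) + - r v) ` {w. (v, w) \<in> E}"
    by (auto simp: reweighted_def)
  then have out: "beta_out E (reweighted r) v = out_potential r v - r v"
    unfolding beta_out_def out_potential_def
    using Max_add_commute[OF finite_successors successors_nonempty[OF v],
        of "\<lambda>w. \<alpha> v w + r w" "- r v"] by simp
  have "{reweighted r u v | u. (u, v) \<in> E} = (\<lambda>u. (\<alpha> u v - r u) + r v) ` {u. (u, v) \<in> E}"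
    by (auto simp: reweighted_def)
  then have "beta_in E (reweighted r) v = in_potential r v + r v"
    unfolding beta_in_def in_potential_def
    using Max_add_commute[OF finite_predecessors predecessors_nonempty[OF v],
        of "\<lambda>u. \<alpha> u v - r u" "r v"] by simp
  with out show ?thesis unfolding rhoR_def excess_def by simp
qed

lemma raise_reweighted:
  "raise E (reweighted r) v = reweighted (r(v := r v + rhoR E (reweighted r) v / 2))"
proof (cases "rhoR E (reweighted r) v > 0")
  case True
  then show ?thesis unfolding raise_def Let_def by (auto simp: reweighted_def fun_eq_iff)
next
  case False
  then have "rhoR E (reweighted r) v = 0" unfolding rhoR_def by simp
  then show ?thesis unfolding raise_def Let_def by simp
qed

lemma beta_seq_reweighted: "beta_seq E \<alpha> \<sigma> t = reweighted (raising_vec E \<alpha> \<sigma> t)"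
proof (induction t)
  case 0
  then show ?case by (simp add: reweighted_def fun_eq_iff)
next
  case (Suc t)
  have "beta_seq E \<alpha> \<sigma> (Suc t) = raise E (reweighted (raising_vec E \<alpha> \<sigma> t)) (\<sigma> t)"
    by (simp add: Suc.IH)
  also have "\<dots> = reweighted ((raising_vec E \<alpha> \<sigma> t)(\<sigma> t :=
      raising_vec E \<alpha> \<sigma> t (\<sigma> t) + rhoR E (reweighted (raising_vec E \<alpha> \<sigma> t)) (\<sigma> t) / 2))"
    by (rule raise_reweighted)
  also have "\<dots> = reweighted (raising_vec E \<alpha> \<sigma> (Suc t))"
    by (rule arg_cong[where f = reweighted]) (simp add: Suc.IH fun_eq_iff)
  finally show ?case .
qed

lemma raising_vec_Suc:
  "\<sigma> t \<in> V \<Longrightarrow> raising_vec E \<alpha> \<sigma> (Suc t) = (raising_vec E \<alpha> \<sigma> t)(\<sigma> t :=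
      raising_vec E \<alpha> \<sigma> t (\<sigma> t) + excess (raising_vec E \<alpha> \<sigma> t) (\<sigma> t) / 2)"
  by (simp add: fun_eq_iff beta_seq_reweighted rhoR_reweighted)

lemma out_potential_mono:
  "(\<And>x. x \<in> V \<Longrightarrow> r x \<le> s x) \<Longrightarrow> v \<in> V \<Longrightarrow> out_potential r v \<le> out_potential s v"
  unfolding out_potential_def using edges_subset
  by (intro Max_image_mono finite_successors successors_nonempty) auto

lemma in_potential_antimono:
  "(\<And>x. x \<in> V \<Longrightarrow> r x \<le> s x) \<Longrightarrow> v \<in> V \<Longrightarrow> in_potential s v \<le> in_potential r v"
  unfolding in_potential_def using edges_subset
  by (intro Max_image_mono finite_predecessors predecessors_nonempty) auto

lemma out_potential_diff_const:
  assumes v: "v \<in> V"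
  shows "out_potential (\<lambda>x. r x - k) v = out_potential r v - k"
proof -
  have eq: "(\<lambda>w. \<alpha> v w + (r w - k)) = (\<lambda>w. (\<alpha> v w + r w) + - k)" by (simp add: fun_eq_iff)
  show ?thesis unfolding out_potential_def eq
    using Max_add_commute[OF finite_successors successors_nonempty[OF v],
        of "\<lambda>w. \<alpha> v w + r w" "- k"] by simp
qed

lemma in_potential_diff_const:
  assumes v: "v \<in> V"
  shows "in_potential (\<lambda>x. r x - k) v = in_potential r v + k"
proof -
  have eq: "(\<lambda>u. \<alpha> u v - (r u - k)) = (\<lambda>u. (\<alpha> u v - r u) + k)" by (simp add: fun_eq_iff)
  show ?thesis unfolding in_potential_def eq
    using Max_add_commute[OF finite_predecessors predecessors_nonempty[OF v],
        of "\<lambda>u. \<alpha> u v - r u" k] by simp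
qed

lemma raising_step_le_stable:
  assumes "\<And>x. x \<in> V \<Longrightarrow> r x \<le> s x" "stable s" "v \<in> V"
  shows "r v + excess r v / 2 \<le> s v"
proof -
  have "out_potential r v - in_potential r v \<le> out_potential s v - in_potential s v"
    using out_potential_mono[of r s, OF assms(1,3)] in_potential_antimono[of r s, OF assms(1,3)]
    by simp
  also have "\<dots> \<le> 2 * s v" using assms(2,3) unfolding stable_def by blast
  finally have "out_potential r v - in_potential r v \<le> 2 * s v" .
  moreover have "r v \<le> s v" using assms(1,3) .
  ultimately show ?thesis unfolding excess_def by (auto simp: max_def field_simps)
qed

lemma raising_step_ge:
  assumes "\<And>x. x \<in> V \<Longrightarrow> s x - \<epsilon> \<le> r x" "v \<in> V"
  shows "(out_potential s v - in_potential s v) / 2 - \<epsilon> \<le> r v + excess r v / 2"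
proof -
  have "out_potential (\<lambda>x. s x - \<epsilon>) v \<le> out_potential r v"
    "in_potential r v \<le> in_potential (\<lambda>x. s x - \<epsilon>) v"
    using out_potential_mono[of "\<lambda>x. s x - \<epsilon>" r, OF assms]
      in_potential_antimono[of "\<lambda>x. s x - \<epsilon>" r, OF assms] by simp_all
  then have "out_potential s v - in_potential s v - 2 * \<epsilon> \<le> out_potential r v - in_potential r v"
    using out_potential_diff_const[OF assms(2)] in_potential_diff_const[OF assms(2)] by simp
  then show ?thesis unfolding excess_def by (auto simp: max_def field_simps)
qed

lemma nonneg_stable_exists:
  assumes "V \<noteq> {}"
  shows "\<exists>s. (\<forall>v\<in>V. 0 \<le> s v) \<and> stable s"
proof -
  obtain xs\<^sub>0 where "closed_walk E xs\<^sub>0" using closed_walk_through assms by blast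
  then obtain \<mu> cw where
    mean: "\<forall>xs. closed_walk E xs \<longrightarrow> walk_weight \<alpha> xs \<le> \<mu> * (real (length xs) - 1)" and
    cw: "closed_walk E cw" "walk_weight \<alpha> cw = \<mu> * (real (length cw) - 1)"
    using max_cycle_mean_exists[OF finite_vertices edges_subset] by blast
  define c where "c u w = \<alpha> u w - \<mu>" for u w
  have c_weight: "walk_weight c xs = walk_weight \<alpha> xs - \<mu> * (real (length xs) - 1)"
    if "closed_walk E xs" for xs
    using that walk_weight_diff_const[of xs \<alpha> \<mu>] unfolding c_def closed_walk_def by force
  have nonpos: "walk_weight c xs \<le> 0" if "closed_walk E xs" for xs
    using mean c_weight that by simp
  have x: "hd cw \<in> V" using closed_walk_hd_in_vertices[OF cw(1)] .
  define d where "d = max_path_weight c (hd cw)"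
  define s where "s v = Max (d ` V) - d v" for v
  have "\<forall>v\<in>V. 0 \<le> s v" unfolding s_def using finite_vertices by simp
  moreover have "stable s" unfolding stable_def
  proof
    fix v assume v: "v \<in> V"
    have "\<alpha> v w + s w \<le> \<mu> + s v" if "(v, w) \<in> E" for w
      using max_path_weight_edge[OF nonpos x that] unfolding s_def c_def d_def by simp
    then have out: "out_potential s v \<le> \<mu> + s v"
      unfolding out_potential_def using finite_successors successors_nonempty[OF v] by simp
    obtain u where u: "(u, v) \<in> E" "d v \<le> d u + c u v"
      using max_path_weight_tight[OF nonpos cw(1) _ v] c_weight[OF cw(1)] cw(2) unfolding d_def
      by auto
    have "\<mu> - s v \<le> \<alpha> u v - s u" using u(2) unfolding s_def c_def by simp
    also have "\<dots> \<le> in_potential s v"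
      unfolding in_potential_def using finite_predecessors u(1) by (intro Max_ge) auto
    finally show "out_potential s v - in_potential s v \<le> 2 * s v" using out by simp
  qed
  ultimately show ?thesis by blast
qed

definition raising_limit :: "(nat \<Rightarrow> 'v) \<Rightarrow> 'v \<Rightarrow> real" where
  "raising_limit \<sigma> x = (SUP t. raising_vec E \<alpha> \<sigma> t x)"

context
  fixes \<sigma> :: "nat \<Rightarrow> 'v"
  assumes fair: "fair V \<sigma>"
begin

lemma raising_vec_incseq: "incseq (\<lambda>t. raising_vec E \<alpha> \<sigma> t x)"
proof (rule incseq_SucI)
  fix t
  have "\<sigma> t \<in> V" using fair unfolding fair_def by blast
  then show "raising_vec E \<alpha> \<sigma> t x \<le> raising_vec E \<alpha> \<sigma> (Suc t) x"
    by (simp add: raising_vec_Suc excess_def del: raising_vec.simps)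
qed

lemma raising_vec_le_stable:
  assumes "stable s" "\<forall>v\<in>V. 0 \<le> s v" "x \<in> V"
  shows "raising_vec E \<alpha> \<sigma> t x \<le> s x"
  using assms(3)
proof (induction t arbitrary: x)
  case 0
  then show ?case using assms(2) by simp
next
  case (Suc t)
  have "\<sigma> t \<in> V" using fair unfolding fair_def by blast
  then show ?case
    using Suc raising_step_le_stable[of "raising_vec E \<alpha> \<sigma> t" s "\<sigma> t", OF Suc.IH assms(1)]
    by (simp add: raising_vec_Suc del: raising_vec.simps)
qed

lemma raising_vec_bdd_above: "x \<in> V \<Longrightarrow> bdd_above (range (\<lambda>t. raising_vec E \<alpha> \<sigma> t x))"
proof -
  assume x: "x \<in> V"
  have "V \<noteq> {}" using fair unfolding fair_def by blast
  then obtain s where "\<forall>v\<in>V. 0 \<le> s v" "stable s" using nonneg_stable_exists by blast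
  then show ?thesis using raising_vec_le_stable x unfolding bdd_above_def by blast
qed

lemma raising_vec_tendsto_limit:
  "x \<in> V \<Longrightarrow> (\<lambda>t. raising_vec E \<alpha> \<sigma> t x) \<longlonglongrightarrow> raising_limit \<sigma> x"
  unfolding raising_limit_def by (rule LIMSEQ_incseq_SUP[OF raising_vec_bdd_above raising_vec_incseq])

lemma raising_vec_le_limit: "x \<in> V \<Longrightarrow> raising_vec E \<alpha> \<sigma> t x \<le> raising_limit \<sigma> x"
  unfolding raising_limit_def by (rule cSUP_upper[OF _ raising_vec_bdd_above]) auto

lemma raising_limit_nonneg: "x \<in> V \<Longrightarrow> 0 \<le> raising_limit \<sigma> x"
  using raising_vec_le_limit[of x 0] by simp

lemma raising_limit_le_stable:
  "stable s \<Longrightarrow> \<forall>v\<in>V. 0 \<le> s v \<Longrightarrow> x \<in> V \<Longrightarrow> raising_limit \<sigma> x \<le> s x"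
  unfolding raising_limit_def using raising_vec_le_stable by (intro cSUP_least) auto

text \<open>Late enough, \<open>r(t)\<close> is within \<open>\<delta>/4\<close> of the limit everywhere, so by fairness a
  raising at \<open>v\<close> would still push \<open>r v\<close> past its limit if the limit violated stability at
  \<open>v\<close> by \<open>\<delta>\<close>.\<close>

lemma raising_limit_stable: "stable (raising_limit \<sigma>)"
  unfolding stable_def
proof (rule ballI, rule ccontr)
  fix v assume v: "v \<in> V"
  let ?L = "raising_limit \<sigma>" and ?r = "raising_vec E \<alpha> \<sigma>"
  define \<delta> where "\<delta> = out_potential ?L v - in_potential ?L v - 2 * ?L v"
  assume "\<not> out_potential ?L v - in_potential ?L v \<le> 2 * ?L v"
  then have \<delta>: "\<delta> > 0" unfolding \<delta>_def by simp
  have "\<forall>\<^sub>F t in sequentially. \<forall>x\<in>V. ?L x - \<delta> / 4 < ?r t x"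
    using finite_vertices \<delta> order_tendstoD(1)[OF raising_vec_tendsto_limit]
    by (intro eventually_ball_finite) auto
  then obtain T where T: "\<And>t x. T \<le> t \<Longrightarrow> x \<in> V \<Longrightarrow> ?L x - \<delta> / 4 \<le> ?r t x"
    unfolding eventually_sequentially by (meson less_imp_le)
  have "infinite {t. \<sigma> t = v}" using fair v unfolding fair_def by blast
  then obtain t where t: "T \<le> t" "\<sigma> t = v"
    unfolding finite_nat_set_iff_bounded_le by (meson mem_Collect_eq nle_le)
  have "(out_potential ?L v - in_potential ?L v) / 2 - \<delta> / 4 \<le> ?r t v + excess (?r t) v / 2"
    using raising_step_ge[OF T[OF t(1)] v] .
  also have "\<dots> = ?r (Suc t) v" using t(2) v by (simp add: raising_vec_Suc del: raising_vec.simps)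
  also have "\<dots> \<le> ?L v" using raising_vec_le_limit[OF v] .
  finally show False using \<delta> unfolding \<delta>_def by (simp add: field_simps)
qed

end

lemma raising_limit_independent:
  assumes "fair V \<sigma>\<^sub>1" "fair V \<sigma>\<^sub>2" "x \<in> V"
  shows "raising_limit \<sigma>\<^sub>1 x = raising_limit \<sigma>\<^sub>2 x"
  using raising_limit_le_stable[OF assms(1) raising_limit_stable[OF assms(2)]]
    raising_limit_le_stable[OF assms(2) raising_limit_stable[OF assms(1)]]
    raising_limit_nonneg[OF assms(1)] raising_limit_nonneg[OF assms(2)] assms(3)
  by (meson antisym)

end

theorem lemma3:
  fixes V :: "'v set" and E :: "('v \<times> 'v) set" and \<alpha> :: "'v \<Rightarrow> 'v \<Rightarrow> real"
  assumes "finite V" and "strongly_connected V E"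
  shows "\<exists>rstar :: 'v \<Rightarrow> real. \<forall>\<sigma>. fair V \<sigma> \<longrightarrow>
           (\<forall>v\<in>V. (\<lambda>t. raising_vec E \<alpha> \<sigma> t v) \<longlonglongrightarrow> rstar v)"
proof (cases "\<exists>\<sigma>. fair V \<sigma>")
  case True
  then obtain \<sigma>\<^sub>0 where "fair V \<sigma>\<^sub>0" by blast
  interpret raising_process V E \<alpha> using assms by unfold_locales
  show ?thesis
    using raising_vec_tendsto_limit raising_limit_independent[OF _ \<open>fair V \<sigma>\<^sub>0\<close>]
    by (intro exI[of _ "raising_limit \<sigma>\<^sub>0"]) metis
qed blast

end
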